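(* Let $T$ be a phylogenetic tree with leaf set $X$ and nonnegative branch lengths. Consider the symmetric two-state model on $T$: choose an arbitrary root vertex, choose its state in $\{0,1\}$ uniformly at random, and evolve states away from the root so that along each edge of length $t$ the state changes with probability $\tfrac12(1-e^{-2t})$, independently across edges. For $A\subseteq X$ let $s_A$ be the probability that the resulting states at the leaves are not constant over $A$, and let $\delta_A$ be the sum of branch lengths of the smallest subtree of $T$ connecting $A$. Let $\boldsymbol{\delta}$ and $\mathbf{s}$ be the vectors of $\delta_A$ and $s_A$ values, indexed by the nonempty subsets $A\subseteq X$ of even cardinality. Define the square matrix $\mathbf{G}$ indexed by these subsets by $\mathbf{G}_{AB}=2^{-|A|+1}$ if $B\subseteq A$ and $0$ otherwise. Then $\mathbf{G}$ is invertible with \[ (\mathbf{G}^{-1})_{AB}=\begin{cases}2^{|B|-1}\mathbb{E}_{|A|-|B|}, & B\subseteq A,\\ 0,&\text{otherwise},\end{cases} \] and \[ \boldsymbol{\delta}=-\mathbf{G}\log(\mathbf{1}-\mathbf{G}^{-1}\mathbf{s}), \] where $\mathbf{1}$ is the all-ones vector and $\log$ is applied entrywise.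
   Context: The Euler numbers $\mathbb{E}_k$ are defined by $\frac{1}{\cosh(x)}=\frac{2}{e^x+e^{-x}}=\sum_{k=0}^\infty \mathbb{E}_k\frac{x^k}{k!}$. A phylogenetic tree with leaf set $X$ is a tree whose leaves are bijectively labelled by $X$ and whose internal vertices have degree at least $3$. *)

theory Defs
  imports "HOL-Analysis.Analysis" "HOL-Computational_Algebra.Formal_Power_Series"
begin

text \<open>1/cosh x = 2/(e^x + e^-x) = sum E_k x^k / k!, as formal power series over the reals.\<close>
definition euler_num :: "nat \<Rightarrow> real" where
  "euler_num k = fact k * fps_nth (fps_const 2 * inverse (fps_exp 1 + fps_exp (-1))) k"

definition simple_graph :: "'v set \<Rightarrow> 'v set set \<Rightarrow> bool" where
  "simple_graph V E \<longleftrightarrow> finite V \<and> (\<forall>e\<in>E. e \<subseteq> V \<and> card e = 2)"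

definition degree :: "'v set set \<Rightarrow> 'v \<Rightarrow> nat" where
  "degree E v = card {e\<in>E. v \<in> e}"

definition reach :: "'v set set \<Rightarrow> 'v \<Rightarrow> 'v \<Rightarrow> bool" where
  "reach F u v \<longleftrightarrow> (u, v) \<in> {(x, y). {x, y} \<in> F}\<^sup>*"

definition is_cycle :: "'v set set \<Rightarrow> 'v list \<Rightarrow> bool" where
  "is_cycle E vs \<longleftrightarrow> length vs \<ge> 3 \<and> distinct vs \<and>
     (\<forall>i < length vs. {vs ! i, vs ! ((i + 1) mod length vs)} \<in> E)"

definition is_tree :: "'v set \<Rightarrow> 'v set set \<Rightarrow> bool" where
  "is_tree V E \<longleftrightarrow> simple_graph V E \<and> V \<noteq> {} \<and>
     (\<forall>u\<in>V. \<forall>v\<in>V. reach E u v) \<and> (\<nexists>vs. is_cycle E vs)"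

text \<open>Phylogenetic tree with leaf set X: leaves (vertices of degree at most 1) are exactly X
  (labelling = identity), internal vertices have degree at least 3.\<close>
definition phylo_tree :: "'v set \<Rightarrow> 'v set set \<Rightarrow> 'v set \<Rightarrow> bool" where
  "phylo_tree V E X \<longleftrightarrow> is_tree V E \<and> X = {v\<in>V. degree E v \<le> 1} \<and>
     (\<forall>v\<in>V - X. degree E v \<ge> 3)"

definition flip_prob :: "('v set \<Rightarrow> real) \<Rightarrow> 'v set \<Rightarrow> real" where
  "flip_prob w e = (1 - exp (-2 * w e)) / 2"

definition states :: "'v set \<Rightarrow> ('v \<Rightarrow> bool) set" where
  "states V = {\<sigma>. \<forall>v. v \<notin> V \<longrightarrow> \<sigma> v = False}"

text \<open>Probability of a state assignment: uniform root state (1/2) times independent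
  symmetric transitions along every edge (independent of the choice of root).\<close>
definition state_prob :: "'v set set \<Rightarrow> ('v set \<Rightarrow> real) \<Rightarrow> ('v \<Rightarrow> bool) \<Rightarrow> real" where
  "state_prob E w \<sigma> = (1/2) * (\<Prod>e\<in>E.
      if (\<exists>u\<in>e. \<exists>v\<in>e. \<sigma> u \<noteq> \<sigma> v) then flip_prob w e else 1 - flip_prob w e)"

definition split_prob :: "'v set \<Rightarrow> 'v set set \<Rightarrow> ('v set \<Rightarrow> real) \<Rightarrow> 'v set \<Rightarrow> real" where
  "split_prob V E w A = (\<Sum>\<sigma>\<in>{\<sigma>\<in>states V. \<exists>a\<in>A. \<exists>b\<in>A. \<sigma> a \<noteq> \<sigma> b}. state_prob E w \<sigma>)"

definition span_edges :: "'v set set \<Rightarrow> 'v set \<Rightarrow> 'v set set" where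
  "span_edges E A = \<Inter>{F. F \<subseteq> E \<and> (\<forall>a\<in>A. \<forall>b\<in>A. reach F a b)}"

definition tree_length :: "'v set set \<Rightarrow> ('v set \<Rightarrow> real) \<Rightarrow> 'v set \<Rightarrow> real" where
  "tree_length E w A = (\<Sum>e\<in>span_edges E A. w e)"

definition even_subsets :: "'v set \<Rightarrow> 'v set set" where
  "even_subsets X = {A. A \<subseteq> X \<and> A \<noteq> {} \<and> even (card A)}"

definition Gmat :: "'v set \<Rightarrow> 'v set \<Rightarrow> real" where
  "Gmat A B = (if B \<subseteq> A then 2 powr (1 - real (card A)) else 0)"

definition Ginv :: "'v set \<Rightarrow> 'v set \<Rightarrow> real" where
  "Ginv A B = (if B \<subseteq> A then 2 ^ (card B - 1) * euler_num (card A - card B) else 0)"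

end

theory Submission
  imports Defs "HOL-Library.Transitive_Closure_Table"
begin

text \<open>
  Root the tree at a vertex r and encode the two states by spins \<plusminus>1. A state assignment is
  determined by the root state and the set F of edges along which the state flips, and under the
  model these flips are independent with probabilities (1 - exp(-2 w_e)) / 2. A vertex differs from
  the root iff an odd number of edges of F cut it off from r, so for an even vertex set S the
  expected spin product q_S factorises over the edges: an edge contributes exp(-2 w_e) if its far
  side contains an odd number of vertices of S, and 1 otherwise.

  The leaf states are constant on A iff 2^(1-|A|) \<Sum>_{B \<subseteq> A even} \<Prod>_{x\<in>B} spin(x) is 1 (it is 0
  otherwise), whence s = G (1 - q) and G^-1 s = 1 - q. Applying G to -ln q counts, for every edge,
  the even B \<subseteq> A that meet its far side oddly: there are 2^(|A|-2) of them if the edge separates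
  A and none otherwise, which leaves the length of the subtree spanned by A. The formula for G^-1
  amounts to \<Sum>_{j even} (m choose j) E_j = [m = 0] for even m, i.e. cosh x \<cdot> sech x = 1.
\<close>

section \<open>Subsets of even cardinality\<close>

lemma sum_Pow_card:
  fixes g :: "nat \<Rightarrow> 'a::comm_semiring_1"
  assumes "finite M"
  shows "(\<Sum>D\<in>Pow M. g (card D)) = (\<Sum>j\<le>card M. of_nat (card M choose j) * g j)"
proof -
  have "(\<Sum>D\<in>Pow M. g (card D)) = (\<Sum>j\<le>card M. \<Sum>D\<in>{D\<in>Pow M. card D = j}. g (card D))"
    by (rule sum.group[symmetric]) (use assms in \<open>auto intro: card_mono\<close>)
  also have "\<dots> = (\<Sum>j\<le>card M. of_nat (card M choose j) * g j)"
  proof (rule sum.cong[OF refl])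
    fix j
    have "{D\<in>Pow M. card D = j} = {D. D \<subseteq> M \<and> card D = j}" by auto
    then show "(\<Sum>D\<in>{D\<in>Pow M. card D = j}. g (card D)) = of_nat (card M choose j) * g j"
      using n_subsets[OF assms, of j] by simp
  qed
  finally show ?thesis .
qed

lemma card_Pow_filter_card:
  assumes "finite A"
  shows "real (card {B. B \<subseteq> A \<and> P (card B)}) = (\<Sum>j\<le>card A. if P j then real (card A choose j) else 0)"
proof -
  have "{B. B \<subseteq> A \<and> P (card B)} = {B\<in>Pow A. P (card B)}" by auto
  then have "real (card {B. B \<subseteq> A \<and> P (card B)}) = (\<Sum>B\<in>Pow A. if P (card B) then 1 else 0)"
    using sum.inter_filter[of "Pow A" "\<lambda>_. 1::real" "\<lambda>B. P (card B)"] assms by simp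
  also have "\<dots> = (\<Sum>j\<le>card A. if P j then real (card A choose j) else 0)"
    using sum_Pow_card[OF assms, of "\<lambda>j. if P j then 1 else 0 :: real"] by (simp add: if_distrib cong: if_cong)
  finally show ?thesis .
qed

definition even_Pow :: "'a set \<Rightarrow> 'a set set" where
  "even_Pow A = {B. B \<subseteq> A \<and> even (card B)}"

lemma finite_even_Pow: "finite A \<Longrightarrow> finite (even_Pow A)"
  unfolding even_Pow_def by (rule finite_subset[of _ "Pow A"]) auto

lemma card_even_Pow:
  assumes "finite A" "A \<noteq> {}"
  shows "card (even_Pow A) = 2 ^ (card A - 1)"
proof -
  have n: "card A > 0" using assms by (simp add: card_gt_0_iff)
  have "2 * real (card (even_Pow A)) = 2 ^ card A"
    using card_Pow_filter_card[OF assms(1), of even] choose_even_sum[OF n]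
    by (simp add: even_Pow_def)
  also have "\<dots> = 2 * 2 ^ (card A - 1)" using power_minus_mult[OF n, of "2::real"] by (simp add: mult.commute)
  finally have "real (card (even_Pow A)) = real (2 ^ (card A - 1))" by simp
  then show ?thesis by (simp only: of_nat_eq_iff)
qed

lemma card_odd_Pow:
  assumes "finite A"
  shows "card {B. B \<subseteq> A \<and> odd (card B)} = (if A = {} then 0 else 2 ^ (card A - 1))"
proof (cases "A = {}")
  case False
  then have n: "card A > 0" using assms by (simp add: card_gt_0_iff)
  have "2 * real (card {B. B \<subseteq> A \<and> odd (card B)}) = 2 ^ card A"
    using card_Pow_filter_card[OF assms(1), of odd] choose_odd_sum[OF n] by simp
  also have "\<dots> = 2 * 2 ^ (card A - 1)" using power_minus_mult[OF n, of "2::real"] by (simp add: mult.commute)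
  finally have "real (card {B. B \<subseteq> A \<and> odd (card B)}) = real (2 ^ (card A - 1))" by simp
  then show ?thesis using False by (simp only: of_nat_eq_iff if_False)
qed simp

lemma card_even_Pow_odd_Int:
  assumes A: "finite A" and K: "K \<subseteq> A"
  shows "card {B\<in>even_Pow A. odd (card (B \<inter> K))} = (if K \<noteq> {} \<and> A - K \<noteq> {} then 2 ^ (card A - 2) else 0)"
proof -
  let ?odd = "\<lambda>M. {B. B \<subseteq> M \<and> odd (card B)}"
  have finK: "finite K" using A K by (rule finite_subset[rotated])
  have card_split: "card B = card (B \<inter> K) + card (B - K)" if "B \<subseteq> A" for B
    using that A by (meson card_Int_Diff finite_subset)
  have "bij_betw (\<lambda>B. (B \<inter> K, B - K)) {B\<in>even_Pow A. odd (card (B \<inter> K))} (?odd K \<times> ?odd (A - K))"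
  proof (rule bij_betw_byWitness[where f'="\<lambda>(P, Q). P \<union> Q"])
    have "odd (card (B - K))" if "B \<in> even_Pow A" "odd (card (B \<inter> K))" for B
      using that card_split[of B] by (simp add: even_Pow_def)
    then show "(\<lambda>B. (B \<inter> K, B - K)) ` {B\<in>even_Pow A. odd (card (B \<inter> K))} \<subseteq> ?odd K \<times> ?odd (A - K)"
      by (auto simp: even_Pow_def)
    have "card (P \<union> Q) = card P + card Q" if "P \<subseteq> K" "Q \<subseteq> A - K" for P Q
      using that A finK by (intro card_Un_disjoint) (auto intro: finite_subset)
    moreover have "(P \<union> Q) \<inter> K = P" if "P \<subseteq> K" "Q \<subseteq> A - K" for P Q
      using that by auto
    ultimately show "(\<lambda>(P, Q). P \<union> Q) ` (?odd K \<times> ?odd (A - K)) \<subseteq> {B\<in>even_Pow A. odd (card (B \<inter> K))}"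
      using K by (auto simp: even_Pow_def)
  qed auto
  then have "card {B\<in>even_Pow A. odd (card (B \<inter> K))} = card (?odd K) * card (?odd (A - K))"
    by (simp add: bij_betw_same_card card_cartesian_product)
  also have "\<dots> = (if K \<noteq> {} \<and> A - K \<noteq> {} then 2 ^ (card A - 2) else 0)"
  proof (cases "K \<noteq> {} \<and> A - K \<noteq> {}")
    case True
    then have "card K \<ge> 1" "card (A - K) \<ge> 1"
      using finK A by (auto simp: Suc_le_eq card_gt_0_iff)
    moreover have "card A = card K + card (A - K)"
      using card_split[of A] K by (simp add: Int_absorb1)
    ultimately have "card A - 2 = (card K - 1) + (card (A - K) - 1)" by simp
    then show ?thesis using True finK A by (simp add: card_odd_Pow power_add)
  qed (auto simp: card_odd_Pow finK A)
  finally show ?thesis .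
qed

definition spin :: "bool \<Rightarrow> real" where
  "spin b = (if b then -1 else 1)"

lemma spin_neq: "spin (b \<noteq> c) = spin b * spin c"
  by (auto simp: spin_def)

lemma spin_odd: "spin (odd n) = (-1) ^ n"
  by (simp add: spin_def)

lemma spin_power_even: "even n \<Longrightarrow> spin b ^ n = 1"
  by (auto simp: spin_def)

lemma prod_spin:
  assumes "finite A"
  shows "(\<Prod>x\<in>A. spin (P x)) = (-1) ^ card {x\<in>A. P x}"
  using prod.inter_filter[OF assms, of "\<lambda>_. -1::real" P] by (simp add: spin_def)

lemma prod_one_plus_spin:
  assumes "finite A"
  shows "(\<Prod>x\<in>A. 1 + spin (\<sigma> x)) = (if \<forall>x\<in>A. \<not> \<sigma> x then 2 ^ card A else 0)"
  using assms by (induction A rule: finite_induct) (auto simp: spin_def)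

lemma sum_even_Pow_spin_prod:
  assumes "finite A" "A \<noteq> {}"
  shows "(\<Sum>B\<in>even_Pow A. \<Prod>x\<in>B. spin (\<sigma> x))
       = (if \<exists>a\<in>A. \<exists>b\<in>A. \<sigma> a \<noteq> \<sigma> b then 0 else 2 ^ (card A - 1))"
proof -
  have "{B\<in>Pow A. even (card B)} = even_Pow A" by (auto simp: even_Pow_def)
  then have "2 * (\<Sum>B\<in>even_Pow A. \<Prod>x\<in>B. spin (\<sigma> x))
      = (\<Sum>B\<in>Pow A. 2 * (if even (card B) then \<Prod>x\<in>B. spin (\<sigma> x) else 0))"
    using sum.inter_filter[of "Pow A" "\<lambda>B. \<Prod>x\<in>B. spin (\<sigma> x)" "\<lambda>B. even (card B)"] assms(1)
    by (simp add: sum_distrib_left)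
  also have "\<dots> = (\<Sum>B\<in>Pow A. (\<Prod>x\<in>B. spin (\<sigma> x)) + (-1) ^ card B * (\<Prod>x\<in>B. spin (\<sigma> x)))"
    by (rule sum.cong) auto
  also have "\<dots> = (\<Prod>x\<in>A. 1 + spin (\<sigma> x)) + (\<Prod>x\<in>A. 1 - spin (\<sigma> x))"
    using prod_add[OF assms(1), of "\<lambda>x. spin (\<sigma> x)" "\<lambda>_. 1"]
      prod_diff_conv_sum[OF assms(1), of "\<lambda>_. 1" "\<lambda>x. spin (\<sigma> x)"]
    by (simp add: sum.distrib add.commute)
  also have "(\<Prod>x\<in>A. 1 - spin (\<sigma> x)) = (\<Prod>x\<in>A. 1 + spin (\<not> \<sigma> x))"
    by (rule prod.cong) (auto simp: spin_def)
  also have "(\<Prod>x\<in>A. 1 + spin (\<sigma> x)) + (\<Prod>x\<in>A. 1 + spin (\<not> \<sigma> x))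
      = (if \<forall>x\<in>A. \<not> \<sigma> x then 2 ^ card A else 0) + (if \<forall>x\<in>A. \<sigma> x then 2 ^ card A else 0)"
    unfolding prod_one_plus_spin[OF assms(1)] by simp
  also have "\<dots> = 2 * (if \<exists>a\<in>A. \<exists>b\<in>A. \<sigma> a \<noteq> \<sigma> b then 0 else 2 ^ (card A - 1))"
  proof (cases "\<exists>a\<in>A. \<exists>b\<in>A. \<sigma> a \<noteq> \<sigma> b")
    case True
    then have "\<not> (\<forall>x\<in>A. \<not> \<sigma> x)" "\<not> (\<forall>x\<in>A. \<sigma> x)" by blast+
    with True assms(2) show ?thesis by simp
  next
    case False
    obtain a where "a \<in> A" using assms(2) by blast
    with False have "(\<forall>x\<in>A. \<not> \<sigma> x) \<longleftrightarrow> \<not> (\<forall>x\<in>A. \<sigma> x)" by blast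
    moreover have "(2::real) ^ card A = 2 * 2 ^ (card A - 1)"
      using power_minus_mult[of "card A" "2::real"] assms by (simp add: card_gt_0_iff mult.commute)
    ultimately show ?thesis using False by (cases "\<forall>x\<in>A. \<sigma> x") simp_all
  qed
  finally show ?thesis by simp
qed

section \<open>Euler numbers and the matrix G\<close>

lemma euler_num_binomial_sum:
  "(\<Sum>i\<le>n. if even (n - i) then real (n choose i) * euler_num i else 0) = (if n = 0 then 1 else 0)"
proof -
  define D :: "real fps" where "D = fps_exp 1 + fps_exp (-1)"
  define S :: "real fps" where "S = fps_const 2 * inverse D"
  have SD: "S * D = fps_const 2"
    unfolding S_def using inverse_mult_eq_1[of D] by (simp add: D_def mult.assoc)
  have D_nth: "fps_nth D m = (if even m then 2 / fact m else 0)" for m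
    by (auto simp: D_def)
  have euler_num_S: "euler_num i = fact i * fps_nth S i" for i
    by (simp add: euler_num_def S_def D_def)
  have "fact n * (if n = 0 then 2 else 0) = fact n * fps_nth (S * D) n"
    by (simp add: SD)
  also have "\<dots> = (\<Sum>i\<le>n. fact n * (fps_nth S i * fps_nth D (n - i)))"
    by (simp add: fps_mult_nth atLeast0AtMost sum_distrib_left)
  also have "\<dots> = (\<Sum>i\<le>n. 2 * (if even (n - i) then real (n choose i) * euler_num i else 0))"
    by (rule sum.cong) (auto simp: D_nth euler_num_S binomial_fact field_simps)
  finally show ?thesis by (simp add: sum_distrib_left[symmetric] split: if_splits)
qed

lemma sum_Pow_euler_num:
  assumes "finite M" "even (card M)"
  shows "(\<Sum>D\<in>Pow M. if even (card D) then euler_num (card D) else 0) = (if M = {} then 1 else 0)"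
proof -
  have "(\<Sum>D\<in>Pow M. if even (card D) then euler_num (card D) else 0)
      = (\<Sum>j\<le>card M. if even (card M - j) then real (card M choose j) * euler_num j else 0)"
    using sum_Pow_card[OF assms(1), of "\<lambda>j. if even j then euler_num j else 0"] assms(2)
    by (auto simp: even_diff_nat intro!: sum.cong)
  then show ?thesis using euler_num_binomial_sum[of "card M"] assms(1) by simp
qed

lemma finite_even_subsets: "finite X \<Longrightarrow> finite (even_subsets X)"
  unfolding even_subsets_def by (rule finite_subset[of _ "Pow X"]) auto

lemma even_subsetsD:
  assumes "A \<in> even_subsets X" "finite X"
  shows "finite A" "A \<subseteq> X" "A \<noteq> {}" "even (card A)"
  using assms by (auto simp: even_subsets_def intro: finite_subset)

lemma even_subsets_eq_even_Pow: "even_subsets A = even_Pow A - {{}}"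
  by (auto simp: even_subsets_def even_Pow_def)

lemma sum_even_Pow:
  assumes "finite A"
  shows "(\<Sum>B\<in>even_Pow A. f B) = f {} + (\<Sum>B\<in>even_subsets A. f B)"
proof -
  have "{} \<in> even_Pow A" by (simp add: even_Pow_def)
  then show ?thesis by (simp add: even_subsets_eq_even_Pow sum.remove finite_even_Pow[OF assms])
qed

lemma card_even_subsets:
  assumes "finite A" "A \<noteq> {}"
  shows "card (even_subsets A) = 2 ^ (card A - 1) - 1"
  using sum_even_Pow[OF assms(1), of "\<lambda>_. 1::nat"] card_even_Pow[OF assms] by simp

lemma Gmat_eq:
  assumes "finite A" "A \<noteq> {}"
  shows "Gmat A B = (if B \<subseteq> A then 1 / 2 ^ (card A - 1) else 0)"
proof -
  obtain k where k: "card A = Suc k"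
    using assms by (metis card_gt_0_iff gr0_implies_Suc)
  have "(2::real) powr (1 - real (card A)) = 2 powr (- real k)"
    using k by simp
  also have "\<dots> = 1 / 2 ^ k"
    by (simp only: powr_minus powr_realpow[of 2 k] inverse_eq_divide)
  finally show ?thesis using k by (simp add: Gmat_def)
qed

lemma sum_Gmat_row:
  assumes X: "finite X" and A: "A \<in> even_subsets X"
  shows "(\<Sum>B\<in>even_subsets X. Gmat A B * f B) = (\<Sum>B\<in>even_subsets A. f B) / 2 ^ (card A - 1)"
proof -
  note A' = even_subsetsD[OF A X]
  have "(\<Sum>B\<in>even_subsets X. Gmat A B * f B) = (\<Sum>B\<in>even_subsets X. if B \<subseteq> A then f B / 2 ^ (card A - 1) else 0)"
    by (rule sum.cong) (simp_all add: Gmat_eq[OF A'(1,3)])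
  also have "\<dots> = (\<Sum>B\<in>{B\<in>even_subsets X. B \<subseteq> A}. f B / 2 ^ (card A - 1))"
    by (rule sum.inter_filter[OF finite_even_subsets[OF X], symmetric])
  also have "{B\<in>even_subsets X. B \<subseteq> A} = even_subsets A"
    using A'(2) by (auto simp: even_subsets_def)
  finally show ?thesis by (simp add: sum_divide_distrib)
qed

lemma Gmat_odd_Int:
  assumes X: "finite X" and A: "A \<in> even_subsets X"
  shows "2 * (\<Sum>B\<in>even_subsets X. Gmat A B * of_bool (odd (card (B \<inter> K))))
       = of_bool (A \<inter> K \<noteq> {} \<and> A - K \<noteq> {})"
proof -
  note A' = even_subsetsD[OF A X]
  have "{B\<in>even_Pow A. odd (card (B \<inter> K))} = {B\<in>even_Pow A. odd (card (B \<inter> (A \<inter> K)))}"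
  proof (rule Collect_cong)
    fix B
    have "B \<subseteq> A \<Longrightarrow> B \<inter> (A \<inter> K) = B \<inter> K" by blast
    then show "B \<in> even_Pow A \<and> odd (card (B \<inter> K))
        \<longleftrightarrow> B \<in> even_Pow A \<and> odd (card (B \<inter> (A \<inter> K)))"
      by (auto simp: even_Pow_def)
  qed
  then have count: "card {B\<in>even_Pow A. odd (card (B \<inter> K))}
      = (if A \<inter> K \<noteq> {} \<and> A - K \<noteq> {} then 2 ^ (card A - 2) else 0)"
    using card_even_Pow_odd_Int[OF A'(1), of "A \<inter> K"] by (simp add: Diff_Int)
  have "(\<Sum>B\<in>even_subsets A. of_bool (odd (card (B \<inter> K))) :: real)
      = (\<Sum>B\<in>even_Pow A. of_bool (odd (card (B \<inter> K))))"
    using sum_even_Pow[OF A'(1), of "\<lambda>B. of_bool (odd (card (B \<inter> K))) :: real"]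
    by (simp del: sum_of_bool_eq)
  also have "\<dots> = real (card (even_Pow A \<inter> {B. odd (card (B \<inter> K))}))"
    using finite_even_Pow[OF A'(1)] by simp
  also have "even_Pow A \<inter> {B. odd (card (B \<inter> K))} = {B\<in>even_Pow A. odd (card (B \<inter> K))}"
    by blast
  finally have sum_eq: "(\<Sum>B\<in>even_subsets A. of_bool (odd (card (B \<inter> K))) :: real)
      = real (card {B\<in>even_Pow A. odd (card (B \<inter> K))})" .
  have "2 * (\<Sum>B\<in>even_subsets X. Gmat A B * of_bool (odd (card (B \<inter> K))))
      = 2 * real (card {B\<in>even_Pow A. odd (card (B \<inter> K))}) / 2 ^ (card A - 1)"
    by (simp add: sum_Gmat_row[OF X A] sum_eq del: sum_of_bool_eq)
  also have "\<dots> = of_bool (A \<inter> K \<noteq> {} \<and> A - K \<noteq> {})"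
  proof (cases "A \<inter> K \<noteq> {} \<and> A - K \<noteq> {}")
    case True
    then have "card (A \<inter> K) > 0" "card (A - K) > 0"
      using A'(1) by (auto simp: card_gt_0_iff)
    then have "card A \<ge> 2" using card_Int_Diff[OF A'(1), of K] by linarith
    then have "card A - 1 = Suc (card A - 2)" by arith
    then have "(2::real) ^ (card A - 1) = 2 * 2 ^ (card A - 2)" by (simp only: power_Suc)
    then show ?thesis unfolding count of_bool_def if_P[OF True] by simp
  next
    case False
    then have "card {B\<in>even_Pow A. odd (card (B \<inter> K))} = 0"
      using count by (simp only: if_False)
    then show ?thesis unfolding of_bool_def if_not_P[OF False] by simp
  qed
  finally show ?thesis .
qed

lemma sum_even_subsets_interval:
  assumes "finite X" "A \<subseteq> X" "C \<noteq> {}"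
  shows "(\<Sum>B\<in>even_subsets X. if C \<subseteq> B \<and> B \<subseteq> A then f B else 0)
       = (\<Sum>B | C \<subseteq> B \<and> B \<subseteq> A. if even (card B) then f B else 0)"
proof -
  have "finite A" using assms(1,2) by (rule finite_subset[rotated])
  then have fin: "finite {B. C \<subseteq> B \<and> B \<subseteq> A}"
    by (rule finite_subset[rotated, OF finite_Pow_iff[THEN iffD2]]) auto
  have "(\<Sum>B\<in>even_subsets X. if C \<subseteq> B \<and> B \<subseteq> A then f B else 0)
      = sum f {B\<in>even_subsets X. C \<subseteq> B \<and> B \<subseteq> A}"
    by (rule sum.inter_filter[symmetric]) (rule finite_even_subsets[OF assms(1)])
  also have "{B\<in>even_subsets X. C \<subseteq> B \<and> B \<subseteq> A} = {B\<in>{B. C \<subseteq> B \<and> B \<subseteq> A}. even (card B)}"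
    using assms by (auto simp: even_subsets_def)
  also have "sum f \<dots> = (\<Sum>B | C \<subseteq> B \<and> B \<subseteq> A. if even (card B) then f B else 0)"
    by (rule sum.inter_filter[OF fin])
  finally show ?thesis .
qed

lemma sum_interval_Pow_Un:
  assumes "finite A" "C \<subseteq> A"
  shows "(\<Sum>B | C \<subseteq> B \<and> B \<subseteq> A. h B) = (\<Sum>D\<in>Pow (A - C). h (C \<union> D))"
  by (rule sum.reindex_bij_witness[where i="\<lambda>D. C \<union> D" and j="\<lambda>B. B - C"])
    (use assms in \<open>auto simp: Un_absorb1 Diff_Diff_Int Int_absorb1 Int_absorb2\<close>)

lemma sum_interval_Pow_Diff:
  assumes "finite A" "C \<subseteq> A"
  shows "(\<Sum>B | C \<subseteq> B \<and> B \<subseteq> A. h B) = (\<Sum>D\<in>Pow (A - C). h (A - D))"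
  by (rule sum.reindex_bij_witness[where i="\<lambda>D. A - D" and j="\<lambda>B. A - B"])
    (use assms in \<open>auto simp: Un_absorb1 Diff_Diff_Int Int_absorb1 Int_absorb2\<close>)

lemma sum_interval_euler_num_from_bottom:
  assumes A: "finite A" "even (card A)" and C: "even (card C)"
  shows "(\<Sum>B | C \<subseteq> B \<and> B \<subseteq> A. if even (card B) then euler_num (card B - card C) else 0)
       = (if A = C then 1 else 0)"
proof (cases "C \<subseteq> A")
  case True
  have C_fin: "finite C" using finite_subset[OF True A(1)] .
  have even: "even (card (A - C))"
    using True A C C_fin by (simp add: card_Diff_subset card_mono)
  have "(\<Sum>B | C \<subseteq> B \<and> B \<subseteq> A. if even (card B) then euler_num (card B - card C) else 0)
      = (\<Sum>D\<in>Pow (A - C). if even (card D) then euler_num (card D) else 0)"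
    unfolding sum_interval_Pow_Un[OF A(1) True]
  proof (rule sum.cong[OF refl])
    fix D assume "D \<in> Pow (A - C)"
    then have "card (C \<union> D) = card C + card D"
      using A(1) C_fin by (subst card_Un_disjoint) (auto intro: finite_subset)
    then show "(if even (card (C \<union> D)) then euler_num (card (C \<union> D) - card C) else 0)
        = (if even (card D) then euler_num (card D) else 0)"
      using C by auto
  qed
  also have "\<dots> = (if A = C then 1 else 0)"
    using True A(1) by (simp add: sum_Pow_euler_num[OF _ even])
  finally show ?thesis .
next
  case False
  then have "{B. C \<subseteq> B \<and> B \<subseteq> A} = {}" "A \<noteq> C" by auto
  then show ?thesis by (simp only: sum.empty if_False)
qed

lemma sum_interval_euler_num_from_top:
  assumes A: "finite A" "even (card A)" and C: "even (card C)"
  shows "(\<Sum>B | C \<subseteq> B \<and> B \<subseteq> A. if even (card B) then euler_num (card A - card B) else 0)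
       = (if A = C then 1 else 0)"
proof (cases "C \<subseteq> A")
  case True
  have even: "even (card (A - C))"
    using True A C by (simp add: card_Diff_subset card_mono finite_subset)
  have "(\<Sum>B | C \<subseteq> B \<and> B \<subseteq> A. if even (card B) then euler_num (card A - card B) else 0)
      = (\<Sum>D\<in>Pow (A - C). if even (card D) then euler_num (card D) else 0)"
    unfolding sum_interval_Pow_Diff[OF A(1) True]
  proof (rule sum.cong[OF refl])
    fix D assume "D \<in> Pow (A - C)"
    then have D: "D \<subseteq> A" by auto
    have "card (A - D) = card A - card D" "card D \<le> card A"
      using card_Diff_subset[OF finite_subset[OF D A(1)] D] card_mono[OF A(1) D] by simp_all
    then show "(if even (card (A - D)) then euler_num (card A - card (A - D)) else 0)
        = (if even (card D) then euler_num (card D) else 0)"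
      using A(2) by (auto simp: even_diff_nat)
  qed
  also have "\<dots> = (if A = C then 1 else 0)"
    using True A(1) by (simp add: sum_Pow_euler_num[OF _ even])
  finally show ?thesis .
next
  case False
  then have "{B. C \<subseteq> B \<and> B \<subseteq> A} = {}" "A \<noteq> C" by auto
  then show ?thesis by (simp only: sum.empty if_False)
qed

lemma Gmat_Ginv_inverse:
  assumes X: "finite X" and "A \<in> even_subsets X" "C \<in> even_subsets X"
  shows "(\<Sum>B\<in>even_subsets X. Gmat A B * Ginv B C) = (if A = C then 1 else 0)"
proof -
  note A = even_subsetsD[OF assms(2) X] and C = even_subsetsD[OF assms(3) X]
  define K :: real where "K = 2 ^ (card C - 1) / 2 ^ (card A - 1)"
  have "(\<Sum>B\<in>even_subsets X. Gmat A B * Ginv B C)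
      = K * (\<Sum>B\<in>even_subsets X. if C \<subseteq> B \<and> B \<subseteq> A then euler_num (card B - card C) else 0)"
    unfolding sum_distrib_left
    by (rule sum.cong) (auto simp: Gmat_eq[OF A(1,3)] Ginv_def K_def)
  also have "\<dots> = K * (if A = C then 1 else 0)"
    by (simp only: sum_even_subsets_interval[OF X A(2) C(3)]
        sum_interval_euler_num_from_bottom[OF A(1,4) C(4)])
  also have "\<dots> = (if A = C then 1 else 0)"
    by (simp add: K_def)
  finally show ?thesis .
qed

lemma Ginv_Gmat_inverse:
  assumes X: "finite X" and "A \<in> even_subsets X" "C \<in> even_subsets X"
  shows "(\<Sum>B\<in>even_subsets X. Ginv A B * Gmat B C) = (if A = C then 1 else 0)"
proof -
  note A = even_subsetsD[OF assms(2) X] and C = even_subsetsD[OF assms(3) X]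
  have "(\<Sum>B\<in>even_subsets X. Ginv A B * Gmat B C)
      = (\<Sum>B\<in>even_subsets X. if C \<subseteq> B \<and> B \<subseteq> A then euler_num (card A - card B) else 0)"
  proof (rule sum.cong[OF refl])
    fix B assume "B \<in> even_subsets X"
    note B = even_subsetsD[OF this X]
    show "Ginv A B * Gmat B C = (if C \<subseteq> B \<and> B \<subseteq> A then euler_num (card A - card B) else 0)"
      by (auto simp: Gmat_eq[OF B(1,3)] Ginv_def)
  qed
  also have "\<dots> = (if A = C then 1 else 0)"
    by (simp only: sum_even_subsets_interval[OF X A(2) C(3)]
        sum_interval_euler_num_from_top[OF A(1,4) C(4)])
  finally show ?thesis .
qed

section \<open>Trees\<close>

lemma reach_refl[simp]: "reach F u u"
  by (simp add: reach_def)

lemma reach_step: "reach F u x \<Longrightarrow> {x, y} \<in> F \<Longrightarrow> reach F u y"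
  unfolding reach_def by (rule rtrancl_into_rtrancl) auto

lemma reach_edge: "{x, y} \<in> F \<Longrightarrow> reach F x y"
  using reach_step[of F x x y] by simp

lemma reach_trans: "reach F u v \<Longrightarrow> reach F v x \<Longrightarrow> reach F u x"
  unfolding reach_def by (rule rtrancl_trans)

lemma reach_sym: "reach F u v \<Longrightarrow> reach F v u"
proof -
  assume "reach F u v"
  then have "(u, v) \<in> {(x, y). {x, y} \<in> F}\<^sup>*" by (simp add: reach_def)
  then show "reach F v u"
  proof (induction rule: rtrancl_induct)
    case base
    then show ?case by simp
  next
    case (step y z)
    then have "{z, y} \<in> F" by (simp add: insert_commute)
    then have "reach F z y" by (rule reach_edge)
    then show ?case using step.IH by (rule reach_trans)
  qed
qed

lemma reach_mono: "reach F u v \<Longrightarrow> F \<subseteq> G \<Longrightarrow> reach G u v"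
  unfolding reach_def by (erule rtrancl_mono[THEN subsetD, rotated]) auto

lemma reach_iff_rtrancl_path: "reach F u v \<longleftrightarrow> (\<exists>xs. rtrancl_path (\<lambda>x y. {x, y} \<in> F) u xs v)"
  unfolding reach_def rtranclp_eq_rtrancl_path[symmetric] by (simp add: rtranclp_rtrancl_eq)

lemma is_cycle_rtrancl_path:
  assumes path: "rtrancl_path (\<lambda>x y. {x, y} \<in> F) u xs v" and "distinct (u # xs)"
    and "length xs \<ge> 2" and "{v, u} \<in> F"
  shows "is_cycle F (u # xs)"
  unfolding is_cycle_def
proof (intro conjI allI impI)
  show "length (u # xs) \<ge> 3" "distinct (u # xs)" using assms(2,3) by simp_all
  fix i assume i: "i < length (u # xs)"
  show "{(u # xs) ! i, (u # xs) ! ((i + 1) mod length (u # xs))} \<in> F"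
  proof (cases "i < length xs")
    case True
    then show ?thesis using rtrancl_path_nth[OF path True] by simp
  next
    case False
    then have "i = length xs" using i by simp
    moreover have "xs \<noteq> []" using assms(3) by auto
    then have "(u # xs) ! length xs = v"
      using rtrancl_path_last[OF path] by (cases xs rule: rev_cases) (auto simp: nth_append)
    ultimately show ?thesis using assms(4) by simp
  qed
qed

lemma reach_Diff_edge_cases:
  assumes e: "e = {u, v}" and r: "reach E u x"
  shows "reach (E - {e}) u x \<or> reach (E - {e}) v x"
proof -
  from r have "(u, x) \<in> {(x, y). {x, y} \<in> E}\<^sup>*" by (simp add: reach_def)
  then show ?thesis
  proof (induction rule: rtrancl_induct)
    case base
    then show ?case by simp
  next
    case (step y z)
    then have yz: "{y, z} \<in> E" by simp
    show ?case
    proof (cases "{y, z} = e")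
      case True
      then have "z = u \<or> z = v" using e by (auto simp: doubleton_eq_iff)
      then show ?thesis by auto
    next
      case False
      then have "{y, z} \<in> E - {e}" using yz by simp
      show ?thesis
      proof (cases "reach (E - {e}) u y")
        case True then show ?thesis using reach_step[OF _ \<open>{y, z} \<in> E - {e}\<close>] by simp
      next
        case False
        then have "reach (E - {e}) v y" using step.IH by simp
        then show ?thesis using reach_step[OF _ \<open>{y, z} \<in> E - {e}\<close>] by simp
      qed
    qed
  qed
qed

locale tree =
  fixes V :: "'v set" and E :: "'v set set"
  assumes tree: "is_tree V E"
begin

lemma finite_V: "finite V"
  using tree by (simp add: is_tree_def simple_graph_def)

lemma edgeE:
  assumes "e \<in> E"
  obtains u v where "e = {u, v}" "u \<noteq> v" "u \<in> V" "v \<in> V"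
proof -
  have "e \<subseteq> V" "card e = 2" using tree assms unfolding is_tree_def simple_graph_def by blast+
  then show ?thesis using that by (auto simp: card_2_iff)
qed

lemma edge_subset_V: "e \<in> E \<Longrightarrow> e \<subseteq> V"
  using tree unfolding is_tree_def simple_graph_def by blast

lemma edge_doubleton_neq: "{y, z} \<in> E \<Longrightarrow> y \<noteq> z"
  using tree unfolding is_tree_def simple_graph_def by fastforce

lemma finite_E: "finite E"
proof -
  have "E \<subseteq> Pow V" using tree unfolding is_tree_def simple_graph_def by blast
  then show ?thesis by (rule finite_subset) (simp add: finite_V)
qed

lemma reach_vertices: "u \<in> V \<Longrightarrow> v \<in> V \<Longrightarrow> reach E u v"
  using tree unfolding is_tree_def by blast

lemma not_reach_Diff_edge:
  assumes e: "e \<in> E" "e = {u, v}" "u \<noteq> v"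
  shows "\<not> reach (E - {e}) u v"
proof
  assume "reach (E - {e}) u v"
  then obtain xs where path: "rtrancl_path (\<lambda>x y. {x, y} \<in> E - {e}) u xs v" and "distinct (u # xs)"
    by (metis reach_iff_rtrancl_path rtrancl_path_distinct)
  have "length xs \<ge> 2"
  proof (cases xs rule: rev_cases)
    case Nil
    then show ?thesis using path e(3) by (auto elim: rtrancl_path.cases)
  next
    case (snoc ys y)
    show ?thesis
    proof (cases ys)
      case Nil
      then have "{u, v} \<in> E - {e}"
        using path snoc rtrancl_path_nth[OF path, of 0] rtrancl_path_last[OF path] by simp
      then show ?thesis using e(2) by simp
    qed (simp add: snoc)
  qed
  moreover have "rtrancl_path (\<lambda>x y. {x, y} \<in> E) u xs v"
    using path by (rule rtrancl_path_mono) simp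
  ultimately have "is_cycle E (u # xs)"
    using is_cycle_rtrancl_path \<open>distinct (u # xs)\<close> e by (simp add: insert_commute)
  then show False using tree unfolding is_tree_def by blast
qed

lemma span_edges_eq:
  assumes A: "A \<subseteq> V"
  shows "span_edges E A = {e\<in>E. \<exists>a\<in>A. \<exists>b\<in>A. \<not> reach (E - {e}) a b}"
proof
  show "span_edges E A \<subseteq> {e\<in>E. \<exists>a\<in>A. \<exists>b\<in>A. \<not> reach (E - {e}) a b}"
  proof
    fix e assume e: "e \<in> span_edges E A"
    have "E \<in> {F. F \<subseteq> E \<and> (\<forall>a\<in>A. \<forall>b\<in>A. reach F a b)}"
      using reach_vertices A by auto
    then have "e \<in> E" using e unfolding span_edges_def by (rule InterD[rotated])
    moreover have "\<not> (\<forall>a\<in>A. \<forall>b\<in>A. reach (E - {e}) a b)"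
    proof
      assume "\<forall>a\<in>A. \<forall>b\<in>A. reach (E - {e}) a b"
      then have "E - {e} \<in> {F. F \<subseteq> E \<and> (\<forall>a\<in>A. \<forall>b\<in>A. reach F a b)}" by auto
      then have "e \<in> E - {e}" using e unfolding span_edges_def by (rule InterD[rotated])
      then show False by simp
    qed
    ultimately show "e \<in> {e\<in>E. \<exists>a\<in>A. \<exists>b\<in>A. \<not> reach (E - {e}) a b}" by blast
  qed
next
  show "{e\<in>E. \<exists>a\<in>A. \<exists>b\<in>A. \<not> reach (E - {e}) a b} \<subseteq> span_edges E A"
  proof
    fix e assume "e \<in> {e\<in>E. \<exists>a\<in>A. \<exists>b\<in>A. \<not> reach (E - {e}) a b}"
    then obtain a b where ab: "a \<in> A" "b \<in> A" "\<not> reach (E - {e}) a b" by blast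
    show "e \<in> span_edges E A"
      unfolding span_edges_def
    proof (rule InterI)
      fix F assume "F \<in> {F. F \<subseteq> E \<and> (\<forall>a\<in>A. \<forall>b\<in>A. reach F a b)}"
      then have "F \<subseteq> E" "reach F a b" using ab by auto
      then show "e \<in> F" using ab(3) reach_mono[of F a b "E - {e}"] by blast
    qed
  qed
qed

end

definition far_side :: "'v set set \<Rightarrow> 'v \<Rightarrow> 'v set \<Rightarrow> 'v set" where
  "far_side E r e = {x. \<not> reach (E - {e}) r x}"

definition flipped :: "('v \<Rightarrow> bool) \<Rightarrow> 'v set \<Rightarrow> bool" where
  "flipped \<sigma> e \<longleftrightarrow> (\<exists>u\<in>e. \<exists>v\<in>e. \<sigma> u \<noteq> \<sigma> v)"

text \<open>The state with value b at the root r that flips exactly along the edges of F.\<close>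
definition assemble :: "'v set \<Rightarrow> 'v set set \<Rightarrow> 'v \<Rightarrow> bool \<Rightarrow> 'v set set \<Rightarrow> 'v \<Rightarrow> bool" where
  "assemble V E r b F = (\<lambda>x. x \<in> V \<and> (b \<noteq> odd (card {e\<in>F. x \<in> far_side E r e})))"

lemma flipped_doubleton: "flipped \<sigma> {u, v} \<longleftrightarrow> \<sigma> u \<noteq> \<sigma> v"
  unfolding flipped_def by auto

lemma far_side_adjacent:
  assumes "{y, z} \<in> E" "{y, z} \<noteq> e"
  shows "y \<in> far_side E r e \<longleftrightarrow> z \<in> far_side E r e"
proof -
  have "{y, z} \<in> E - {e}" "{z, y} \<in> E - {e}" using assms by (auto simp: insert_commute)
  then have "reach (E - {e}) r y \<longleftrightarrow> reach (E - {e}) r z" by (meson reach_step)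
  then show ?thesis by (simp add: far_side_def)
qed

lemma odd_card_toggle:
  assumes "finite S" "finite T" "S - {f} = T - {f}" "\<not> (f \<in> S \<and> f \<in> T)"
  shows "odd (card T) \<longleftrightarrow> (odd (card S) \<noteq> (f \<in> S \<or> f \<in> T))"
proof (cases "f \<in> S")
  case True
  then have "S = insert f T" "f \<notin> T" using assms(3,4) by auto
  then show ?thesis using True assms(2) by simp
next
  case False
  show ?thesis
  proof (cases "f \<in> T")
    case True
    then have "T = insert f S" using assms(3) False by auto
    then show ?thesis using False assms(1) by simp
  next
    case False
    then have "S = T" using assms(3) \<open>f \<notin> S\<close> by auto
    then show ?thesis using False by simp
  qed
qed

locale rooted_tree = tree +
  fixes r :: 'v
  assumes root: "r \<in> V"
begin

lemma far_side_edge: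
  assumes "e \<in> E" "e = {y, z}" "y \<noteq> z"
  shows "y \<in> far_side E r e \<longleftrightarrow> z \<notin> far_side E r e"
proof -
  have "y \<in> V" using edge_subset_V[OF assms(1)] assms(2) by blast
  then have side: "reach (E - {e}) y r \<or> reach (E - {e}) z r"
    by (rule reach_Diff_edge_cases[OF assms(2) reach_vertices[OF _ root]])
  have yz: "\<not> reach (E - {e}) y z" by (rule not_reach_Diff_edge[OF assms])
  then have zy: "\<not> reach (E - {e}) z y" by (auto dest: reach_sym)
  show ?thesis
  proof (cases "reach (E - {e}) y r")
    case True
    have "\<not> reach (E - {e}) r z" using yz reach_trans[OF True] by blast
    then show ?thesis using reach_sym[OF True] by (simp add: far_side_def)
  next
    case False
    then have zr: "reach (E - {e}) z r" using side by blast
    have "\<not> reach (E - {e}) r y" using zy reach_trans[OF zr] by blast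
    then show ?thesis using reach_sym[OF zr] by (simp add: far_side_def)
  qed
qed

lemma reach_Diff_edge_iff_far_side:
  assumes e: "e \<in> E" and x: "x \<in> V" and y: "y \<in> V"
  shows "reach (E - {e}) x y \<longleftrightarrow> (x \<in> far_side E r e \<longleftrightarrow> y \<in> far_side E r e)"
proof
  assume xy: "reach (E - {e}) x y"
  have "reach (E - {e}) r x \<longleftrightarrow> reach (E - {e}) r y"
    using reach_trans[OF _ xy] reach_trans[OF _ reach_sym[OF xy]] by blast
  then show "x \<in> far_side E r e \<longleftrightarrow> y \<in> far_side E r e"
    by (simp add: far_side_def)
next
  obtain a b where ab: "e = {a, b}" "a \<in> V" "b \<notin> far_side E r e"
  proof -
    obtain u v where uv: "e = {u, v}" "u \<noteq> v" "u \<in> V" "v \<in> V" by (rule edgeE[OF e])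
    show ?thesis
    proof (cases "v \<in> far_side E r e")
      case True
      then have "u \<notin> far_side E r e" using far_side_edge[OF e uv(1,2)] by simp
      then show ?thesis using that[of v u] uv by (simp add: insert_commute)
    next
      case False
      then show ?thesis using that[of u v] uv by simp
    qed
  qed
  have rb: "reach (E - {e}) r b" using ab(3) by (simp add: far_side_def)
  have far_reach: "reach (E - {e}) a t" if "t \<in> V" "t \<in> far_side E r e" for t
  proof -
    have "reach (E - {e}) a t \<or> reach (E - {e}) b t"
      by (rule reach_Diff_edge_cases[OF ab(1) reach_vertices[OF ab(2) that(1)]])
    moreover have "\<not> reach (E - {e}) b t"
      using that(2) reach_trans[OF rb] by (auto simp: far_side_def)
    ultimately show ?thesis by blast
  qed
  assume same: "x \<in> far_side E r e \<longleftrightarrow> y \<in> far_side E r e"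
  show "reach (E - {e}) x y"
  proof (cases "x \<in> far_side E r e")
    case True
    then have "reach (E - {e}) a x" "reach (E - {e}) a y"
      using same far_reach x y by auto
    then show ?thesis by (metis reach_sym reach_trans)
  next
    case False
    then have "reach (E - {e}) r x" "reach (E - {e}) r y"
      using same by (auto simp: far_side_def)
    then show ?thesis by (metis reach_sym reach_trans)
  qed
qed

lemma tree_length_eq:
  assumes A: "A \<subseteq> V"
  shows "tree_length E w A = (\<Sum>e\<in>E. w e * of_bool (A \<inter> far_side E r e \<noteq> {} \<and> A - far_side E r e \<noteq> {}))"
proof -
  have "(\<exists>a\<in>A. \<exists>b\<in>A. \<not> reach (E - {e}) a b)
      \<longleftrightarrow> A \<inter> far_side E r e \<noteq> {} \<and> A - far_side E r e \<noteq> {}"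
    if e: "e \<in> E" for e
  proof -
    have "\<not> reach (E - {e}) a b \<longleftrightarrow> (a \<in> far_side E r e \<longleftrightarrow> b \<notin> far_side E r e)"
      if "a \<in> A" "b \<in> A" for a b
      using reach_Diff_edge_iff_far_side[OF e] that A by auto
    then show ?thesis by auto
  qed
  then have "span_edges E A = {e\<in>E. A \<inter> far_side E r e \<noteq> {} \<and> A - far_side E r e \<noteq> {}}"
    unfolding span_edges_eq[OF A] by auto
  then have "tree_length E w A
      = (\<Sum>e\<in>E. if A \<inter> far_side E r e \<noteq> {} \<and> A - far_side E r e \<noteq> {} then w e else 0)"
    unfolding tree_length_def by (simp only: sum.inter_filter[OF finite_E])
  then show ?thesis by (simp only: of_bool_def mult_1_right mult_zero_right if_distrib)
qed

lemma odd_card_far_edges_step: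
  assumes F: "F \<subseteq> E" and yz: "{y, z} \<in> E"
  shows "odd (card {e\<in>F. z \<in> far_side E r e})
     \<longleftrightarrow> (odd (card {e\<in>F. y \<in> far_side E r e}) \<noteq> ({y, z} \<in> F))"
proof -
  let ?S = "\<lambda>x. {e\<in>F. x \<in> far_side E r e}"
  have fin: "finite (?S x)" for x
    using finite_subset[OF F finite_E] by simp
  have opposite: "y \<in> far_side E r {y, z} \<longleftrightarrow> z \<notin> far_side E r {y, z}"
    by (rule far_side_edge[OF yz refl edge_doubleton_neq[OF yz]])
  have "y \<in> far_side E r e \<longleftrightarrow> z \<in> far_side E r e" if "e \<noteq> {y, z}" for e
    using far_side_adjacent[OF yz] that by auto
  then have "?S y - {{y, z}} = ?S z - {{y, z}}" by blast
  moreover have "\<not> ({y, z} \<in> ?S y \<and> {y, z} \<in> ?S z)" using opposite by auto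
  ultimately have "odd (card (?S z)) \<longleftrightarrow> (odd (card (?S y)) \<noteq> ({y, z} \<in> ?S y \<or> {y, z} \<in> ?S z))"
    by (rule odd_card_toggle[OF fin fin])
  moreover have "({y, z} \<in> ?S y \<or> {y, z} \<in> ?S z) \<longleftrightarrow> {y, z} \<in> F" using opposite by auto
  ultimately show ?thesis by blast
qed

lemma flipped_assemble:
  assumes F: "F \<subseteq> E" and e: "e \<in> E"
  shows "flipped (assemble V E r b F) e \<longleftrightarrow> e \<in> F"
proof -
  obtain u v where uv: "e = {u, v}" "u \<in> V" "v \<in> V" by (rule edgeE[OF e])
  have "flipped (assemble V E r b F) e
      \<longleftrightarrow> odd (card {e\<in>F. u \<in> far_side E r e}) \<noteq> odd (card {e\<in>F. v \<in> far_side E r e})"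
    using uv by (auto simp: flipped_doubleton assemble_def)
  also have "\<dots> \<longleftrightarrow> e \<in> F"
    using odd_card_far_edges_step[OF F, of u v] e uv(1) by auto
  finally show ?thesis .
qed

lemma assemble_flipped:
  assumes \<sigma>: "\<sigma> \<in> states V"
  shows "assemble V E r (\<sigma> r) {e\<in>E. flipped \<sigma> e} = \<sigma>"
proof
  fix x
  let ?S = "\<lambda>x. {e\<in>{e\<in>E. flipped \<sigma> e}. x \<in> far_side E r e}"
  show "assemble V E r (\<sigma> r) {e\<in>E. flipped \<sigma> e} x = \<sigma> x"
  proof (cases "x \<in> V")
    case False
    then show ?thesis using \<sigma> by (simp add: assemble_def states_def)
  next
    case True
    have "(r, x) \<in> {(x, y). {x, y} \<in> E}\<^sup>*"
      using reach_vertices[OF root True] by (simp add: reach_def)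
    then have "\<sigma> x = (\<sigma> r \<noteq> odd (card (?S x)))"
    proof (induction rule: rtrancl_induct)
      case base
      show ?case by (simp add: far_side_def)
    next
      case (step y z)
      then have yz: "{y, z} \<in> E" by simp
      have "odd (card (?S z)) \<longleftrightarrow> (odd (card (?S y)) \<noteq> flipped \<sigma> {y, z})"
        using odd_card_far_edges_step[of "{e\<in>E. flipped \<sigma> e}" y z] yz by simp
      then show ?case using step.IH by (auto simp: flipped_doubleton)
    qed
    then show ?thesis using True by (simp add: assemble_def)
  qed
qed

lemma assemble_in_states: "assemble V E r b F \<in> states V"
  by (simp add: assemble_def states_def)

lemma assemble_root: "assemble V E r b F r = b"
  using root by (simp add: assemble_def far_side_def)

lemma sum_states_eq:
  "(\<Sum>\<sigma>\<in>states V. g \<sigma>) = (\<Sum>b\<in>UNIV. \<Sum>F\<in>Pow E. g (assemble V E r b F))"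
proof -
  have flipped_set: "{e\<in>E. flipped (assemble V E r b F) e} = F" if "F \<subseteq> E" for b F
    using flipped_assemble[OF that] that by auto
  have "(\<Sum>\<sigma>\<in>states V. g \<sigma>) = (\<Sum>p\<in>UNIV \<times> Pow E. g (assemble V E r (fst p) (snd p)))"
    by (rule sum.reindex_bij_witness[where j="\<lambda>\<sigma>. (\<sigma> r, {e\<in>E. flipped \<sigma> e})"
        and i="\<lambda>p. assemble V E r (fst p) (snd p)"])
      (simp_all add: assemble_flipped assemble_root assemble_in_states flipped_set
        prod_eq_iff mem_Times_iff)
  also have "\<dots> = (\<Sum>b\<in>UNIV. \<Sum>F\<in>Pow E. g (assemble V E r b F))"
    by (simp add: sum.cartesian_product split_beta)
  finally show ?thesis .
qed

end

section \<open>Spin correlations of the two-state model\<close>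

lemma finite_states: "finite V \<Longrightarrow> finite (states V)"
proof -
  assume "finite V"
  have "states V \<subseteq> (\<lambda>U x. x \<in> U) ` Pow V"
  proof
    fix \<sigma> assume "\<sigma> \<in> states V"
    then have "{x. \<sigma> x} \<in> Pow V" "\<sigma> = (\<lambda>x. x \<in> {x. \<sigma> x})" by (auto simp: states_def)
    then show "\<sigma> \<in> (\<lambda>U x. x \<in> U) ` Pow V" by blast
  qed
  then show ?thesis by (rule finite_subset) (simp add: \<open>finite V\<close>)
qed

definition spin_correlation :: "'v set set \<Rightarrow> 'v \<Rightarrow> ('v set \<Rightarrow> real) \<Rightarrow> 'v set \<Rightarrow> real" where
  "spin_correlation E r w S = (\<Prod>e\<in>E. if odd (card (S \<inter> far_side E r e)) then exp (-2 * w e) else 1)"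

lemma spin_correlation_empty: "spin_correlation E r w {} = 1"
  by (simp add: spin_correlation_def)

lemma ln_spin_correlation:
  assumes "finite E"
  shows "ln (spin_correlation E r w S) = - 2 * (\<Sum>e\<in>E. w e * of_bool (odd (card (S \<inter> far_side E r e))))"
proof -
  have "spin_correlation E r w S = exp (\<Sum>e\<in>E. - 2 * (w e * of_bool (odd (card (S \<inter> far_side E r e)))))"
    unfolding spin_correlation_def exp_sum[OF assms] by (rule prod.cong) auto
  then show ?thesis by (simp add: sum_distrib_left)
qed

context rooted_tree
begin

lemma state_prob_assemble:
  assumes "F \<subseteq> E"
  shows "state_prob E w (assemble V E r b F)
       = 1/2 * (\<Prod>e\<in>E. if e \<in> F then flip_prob w e else 1 - flip_prob w e)"
  unfolding state_prob_def flipped_def[symmetric]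
  by (intro arg_cong[where f="\<lambda>x. 1/2 * x"] prod.cong) (simp_all add: flipped_assemble[OF assms])

lemma spin_prod_assemble:
  assumes F: "F \<subseteq> E" and S: "S \<subseteq> V" "even (card S)"
  shows "(\<Prod>x\<in>S. spin (assemble V E r b F x)) = (\<Prod>e\<in>F. (-1) ^ card (S \<inter> far_side E r e))"
proof -
  have finS: "finite S" using finite_subset[OF S(1) finite_V] .
  have finF: "finite F" using finite_subset[OF F finite_E] .
  have "(\<Prod>x\<in>S. spin (assemble V E r b F x)) = (\<Prod>x\<in>S. spin b * (\<Prod>e\<in>F. spin (x \<in> far_side E r e)))"
  proof (rule prod.cong[OF refl])
    fix x assume "x \<in> S"
    then have "assemble V E r b F x = (b \<noteq> odd (card {e\<in>F. x \<in> far_side E r e}))"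
      using S(1) by (auto simp: assemble_def)
    then show "spin (assemble V E r b F x) = spin b * (\<Prod>e\<in>F. spin (x \<in> far_side E r e))"
      by (simp only: spin_neq spin_odd prod_spin[OF finF])
  qed
  also have "\<dots> = spin b ^ card S * (\<Prod>e\<in>F. \<Prod>x\<in>S. spin (x \<in> far_side E r e))"
    by (simp add: prod.distrib prod.swap[of _ S])
  also have "\<dots> = (\<Prod>e\<in>F. (-1) ^ card (S \<inter> far_side E r e))"
    by (simp add: spin_power_even[OF S(2)] prod_spin[OF finS] Int_def)
  finally show ?thesis .
qed

lemma expected_spin_prod:
  assumes S: "S \<subseteq> V" "even (card S)"
  shows "(\<Sum>\<sigma>\<in>states V. state_prob E w \<sigma> * (\<Prod>x\<in>S. spin (\<sigma> x))) = spin_correlation E r w S"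
proof -
  define z :: "'v set \<Rightarrow> real" where "z e = (-1) ^ card (S \<inter> far_side E r e)" for e
  have "(\<Sum>F\<in>Pow E. state_prob E w (assemble V E r b F) * (\<Prod>x\<in>S. spin (assemble V E r b F x)))
      = 1/2 * spin_correlation E r w S" for b
  proof -
    have "(\<Sum>F\<in>Pow E. state_prob E w (assemble V E r b F) * (\<Prod>x\<in>S. spin (assemble V E r b F x)))
        = (\<Sum>F\<in>Pow E. 1/2 * ((\<Prod>e\<in>F. flip_prob w e * z e) * (\<Prod>e\<in>E - F. 1 - flip_prob w e)))"
    proof (rule sum.cong[OF refl])
      fix F assume "F \<in> Pow E"
      then have F: "F \<subseteq> E" by simp
      have "(\<Prod>e\<in>E. if e \<in> F then flip_prob w e else 1 - flip_prob w e)
          = (\<Prod>e\<in>E - F. 1 - flip_prob w e) * (\<Prod>e\<in>F. flip_prob w e)"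
        by (subst prod.subset_diff[OF F finite_E]) simp
      then show "state_prob E w (assemble V E r b F) * (\<Prod>x\<in>S. spin (assemble V E r b F x))
          = 1/2 * ((\<Prod>e\<in>F. flip_prob w e * z e) * (\<Prod>e\<in>E - F. 1 - flip_prob w e))"
        by (simp add: state_prob_assemble[OF F] spin_prod_assemble[OF F S] prod.distrib
            flip: z_def)
    qed
    also have "\<dots> = 1/2 * (\<Prod>e\<in>E. flip_prob w e * z e + (1 - flip_prob w e))"
      by (simp add: prod_add[OF finite_E] sum_distrib_left)
    also have "(\<Prod>e\<in>E. flip_prob w e * z e + (1 - flip_prob w e)) = spin_correlation E r w S"
      unfolding spin_correlation_def
      by (rule prod.cong[OF refl]) (simp add: z_def flip_prob_def field_simps)
    finally show ?thesis .
  qed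
  note half = this
  show ?thesis
    unfolding sum_states_eq UNIV_bool using half[of False] half[of True] by simp
qed

lemma split_prob_eq:
  assumes A: "A \<subseteq> V" "A \<noteq> {}"
  shows "split_prob V E w A = 1 - (\<Sum>B\<in>even_Pow A. spin_correlation E r w B) / 2 ^ (card A - 1)"
proof -
  have finA: "finite A" using finite_subset[OF A(1) finite_V] .
  have fin: "finite (states V)" by (rule finite_states[OF finite_V])
  define P where "P = state_prob E w"
  define N :: real where "N = 2 ^ (card A - 1)"
  define nonconst :: "('v \<Rightarrow> bool) \<Rightarrow> bool"
    where "nonconst \<sigma> \<longleftrightarrow> (\<exists>a\<in>A. \<exists>b\<in>A. \<sigma> a \<noteq> \<sigma> b)" for \<sigma>
  have total: "(\<Sum>\<sigma>\<in>states V. P \<sigma>) = 1"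
    using expected_spin_prod[of "{}" w] unfolding P_def spin_correlation_empty by simp
  have "1 - of_bool c = (if c then 0 else N) / N" for c
    by (simp add: N_def)
  then have const: "1 - of_bool (nonconst \<sigma>) = (\<Sum>B\<in>even_Pow A. \<Prod>x\<in>B. spin (\<sigma> x)) / N" for \<sigma>
    unfolding sum_even_Pow_spin_prod[OF finA A(2)] N_def nonconst_def .
  have "(if c then p else 0) = p - p * (1 - of_bool c)" for c and p :: real
    by simp
  then have "split_prob V E w A = (\<Sum>\<sigma>\<in>states V. P \<sigma> - P \<sigma> * (1 - of_bool (nonconst \<sigma>)))"
    unfolding split_prob_def P_def sum.inter_filter[OF fin] nonconst_def[symmetric] by simp
  also have "\<dots> = 1 - (\<Sum>\<sigma>\<in>states V. \<Sum>B\<in>even_Pow A. P \<sigma> * (\<Prod>x\<in>B. spin (\<sigma> x))) / N"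
    unfolding sum_subtractf total const by (simp add: sum_divide_distrib sum_distrib_left)
  also have "\<dots> = 1 - (\<Sum>B\<in>even_Pow A. \<Sum>\<sigma>\<in>states V. P \<sigma> * (\<Prod>x\<in>B. spin (\<sigma> x))) / N"
    by (subst sum.swap) (rule refl)
  also have "\<dots> = 1 - (\<Sum>B\<in>even_Pow A. spin_correlation E r w B) / N"
  proof -
    have "B \<subseteq> V" "even (card B)" if "B \<in> even_Pow A" for B
      using that A(1) by (auto simp: even_Pow_def)
    then show ?thesis unfolding P_def by (simp add: expected_spin_prod)
  qed
  finally show ?thesis by (simp add: N_def)
qed

lemma split_prob_eq_Gmat:
  assumes X: "X \<subseteq> V" and A: "A \<in> even_subsets X"
  shows "split_prob V E w A = (\<Sum>B\<in>even_subsets X. Gmat A B * (1 - spin_correlation E r w B))"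
proof -
  have finX: "finite X" using finite_subset[OF X finite_V] .
  note A' = even_subsetsD[OF A finX]
  define N :: real where "N = 2 ^ (card A - 1)"
  have "N \<ge> 1" by (simp add: N_def)
  have "(\<Sum>B\<in>even_subsets A. 1 - spin_correlation E r w B)
      = real (card (even_subsets A)) - ((\<Sum>B\<in>even_Pow A. spin_correlation E r w B) - 1)"
    by (simp add: sum_subtractf sum_even_Pow[OF A'(1)] spin_correlation_empty)
  also have "real (card (even_subsets A)) = N - 1"
    by (simp add: card_even_subsets[OF A'(1,3)] N_def of_nat_diff)
  finally have "(\<Sum>B\<in>even_subsets X. Gmat A B * (1 - spin_correlation E r w B))
      = (N - (\<Sum>B\<in>even_Pow A. spin_correlation E r w B)) / N"
    by (simp add: sum_Gmat_row[OF finX A] N_def)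
  also have "\<dots> = split_prob V E w A"
    using \<open>N \<ge> 1\<close> A'(2,3) X by (simp add: split_prob_eq N_def diff_divide_distrib)
  finally show ?thesis ..
qed

lemma Ginv_split_prob:
  assumes X: "X \<subseteq> V" and B: "B \<in> even_subsets X"
  shows "(\<Sum>C\<in>even_subsets X. Ginv B C * split_prob V E w C) = 1 - spin_correlation E r w B"
proof -
  have finX: "finite X" using finite_subset[OF X finite_V] .
  let ?q = "\<lambda>D. 1 - spin_correlation E r w D"
  have "(\<Sum>C\<in>even_subsets X. Ginv B C * split_prob V E w C)
      = (\<Sum>C\<in>even_subsets X. \<Sum>D\<in>even_subsets X. Ginv B C * Gmat C D * ?q D)"
    by (rule sum.cong[OF refl]) (simp add: split_prob_eq_Gmat[OF X] sum_distrib_left mult.assoc)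
  also have "\<dots> = (\<Sum>D\<in>even_subsets X. (\<Sum>C\<in>even_subsets X. Ginv B C * Gmat C D) * ?q D)"
    by (subst sum.swap) (simp add: sum_distrib_right)
  also have "\<dots> = (\<Sum>D\<in>even_subsets X. (if B = D then 1 else 0) * ?q D)"
    by (rule sum.cong[OF refl]) (simp add: Ginv_Gmat_inverse[OF finX B])
  also have "\<dots> = ?q B"
    using B finite_even_subsets[OF finX] by (simp add: if_distrib[of "\<lambda>x. x * _"] cong: if_cong)
  finally show ?thesis .
qed

lemma tree_length_eq_Gmat_ln:
  assumes X: "X \<subseteq> V" and A: "A \<in> even_subsets X"
  shows "tree_length E w A =
    - (\<Sum>B\<in>even_subsets X. Gmat A B * ln (1 - (\<Sum>C\<in>even_subsets X. Ginv B C * split_prob V E w C)))"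
proof -
  have finX: "finite X" using finite_subset[OF X finite_V] .
  let ?odd = "\<lambda>B e. of_bool (odd (card (B \<inter> far_side E r e))) :: real"
  have ln_eq: "ln (1 - (\<Sum>C\<in>even_subsets X. Ginv B C * split_prob V E w C)) = - 2 * (\<Sum>e\<in>E. w e * ?odd B e)"
    if "B \<in> even_subsets X" for B
    by (simp add: Ginv_split_prob[OF X that] ln_spin_correlation[OF finite_E] del: sum_mult_of_bool_eq)
  have "- (\<Sum>B\<in>even_subsets X. Gmat A B * ln (1 - (\<Sum>C\<in>even_subsets X. Ginv B C * split_prob V E w C)))
      = (\<Sum>B\<in>even_subsets X. \<Sum>e\<in>E. w e * (2 * (Gmat A B * ?odd B e)))"
    by (simp add: ln_eq sum_negf[symmetric] sum_distrib_left mult_ac del: sum_mult_of_bool_eq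
        cong: sum.cong)
  also have "\<dots> = (\<Sum>e\<in>E. w e * (2 * (\<Sum>B\<in>even_subsets X. Gmat A B * ?odd B e)))"
    by (subst sum.swap) (simp add: sum_distrib_left del: sum_mult_of_bool_eq)
  also have "\<dots> = (\<Sum>e\<in>E. w e * of_bool (A \<inter> far_side E r e \<noteq> {} \<and> A - far_side E r e \<noteq> {}))"
    by (simp only: Gmat_odd_Int[OF finX A])
  also have "\<dots> = tree_length E w A"
    using even_subsetsD(2)[OF A finX] X by (simp only: tree_length_eq[symmetric] subset_trans)
  finally show ?thesis ..
qed

end

theorem theorem7:
  fixes V :: "'v set" and E :: "'v set set" and X :: "'v set" and w :: "'v set \<Rightarrow> real"
  assumes "phylo_tree V E X"
    and "\<forall>e\<in>E. w e \<ge> 0"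
  shows "(\<forall>A\<in>even_subsets X. \<forall>C\<in>even_subsets X.
            (\<Sum>B\<in>even_subsets X. Gmat A B * Ginv B C) = (if A = C then 1 else 0))
       \<and> (\<forall>A\<in>even_subsets X. \<forall>C\<in>even_subsets X.
            (\<Sum>B\<in>even_subsets X. Ginv A B * Gmat B C) = (if A = C then 1 else 0))
       \<and> (\<forall>A\<in>even_subsets X. tree_length E w A =
            - (\<Sum>B\<in>even_subsets X. Gmat A B *
                 ln (1 - (\<Sum>C\<in>even_subsets X. Ginv B C * split_prob V E w C))))"
proof -
  have T: "is_tree V E" and X: "X \<subseteq> V" using assms(1) by (auto simp: phylo_tree_def)
  obtain r where r: "r \<in> V" using T by (auto simp: is_tree_def)
  interpret rooted_tree V E r by unfold_locales (fact T r)+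
  have finX: "finite X" using finite_subset[OF X finite_V] .
  show ?thesis
  proof (intro conjI ballI)
    fix A C assume "A \<in> even_subsets X" "C \<in> even_subsets X"
    then show "(\<Sum>B\<in>even_subsets X. Gmat A B * Ginv B C) = (if A = C then 1 else 0)"
      and "(\<Sum>B\<in>even_subsets X. Ginv A B * Gmat B C) = (if A = C then 1 else 0)"
      by (rule Gmat_Ginv_inverse[OF finX], rule Ginv_Gmat_inverse[OF finX])
  next
    fix A assume "A \<in> even_subsets X"
    then show "tree_length E w A = - (\<Sum>B\<in>even_subsets X. Gmat A B *
        ln (1 - (\<Sum>C\<in>even_subsets X. Ginv B C * split_prob V E w C)))"
      by (rule tree_length_eq_Gmat_ln[OF X])
  qed
qed

end
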